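(* Let $\mathcal{APS}_4$ be the set of all nonnegative integers that occur as the number of points of $\mathbb{Z}^4$ in the relative interior of a lattice square $\mathrm{conv}\{0,u,v,u+v\}$, where $u,v\in\mathbb{Z}^4$ are nonzero with $u\cdot v=0$ and $u\cdot u=v\cdot v$. Then: (i) $\mathcal{APS}_4$ contains every odd positive integer; (ii) for every prime $p\ge 11$, the even number $p-1$ belongs to $\mathcal{APS}_4$.
   Context: This set is called the sequence of almost perfect squares in dimension 4. For such a square $\square$ with Ehrhart polynomial $E_\square$ (so $E_\square(t)=\#(t\square\cap\mathbb{Z}^4)$ for positive integers $t$), the number of lattice points in its relative interior equals $E_\square(-1)$. *)

theory Defs
  imports "HOL-Analysis.Analysis" "HOL-Computational_Algebra.Primes"
begin

definition is_lattice_point4 :: "real^4 \<Rightarrow> bool" where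
  "is_lattice_point4 x \<longleftrightarrow> (\<forall>i. x $ i \<in> \<int>)"

definition lattice_square4 :: "real^4 \<Rightarrow> real^4 \<Rightarrow> (real^4) set" where
  "lattice_square4 u v = convex hull {0, u, v, u + v}"

definition APS4 :: "nat set" where
  "APS4 = {n. \<exists>u v :: real^4. is_lattice_point4 u \<and> is_lattice_point4 v \<and>
             u \<noteq> 0 \<and> v \<noteq> 0 \<and> inner u v = 0 \<and> inner u u = inner v v \<and>
             n = card {x \<in> rel_interior (lattice_square4 u v). is_lattice_point4 x}}"

end

theory Submission
  imports Defs
begin

text \<open>The interior lattice points of the square spanned by orthogonal integer vectors \<open>u, v\<close> of equal
  length correspond to the parameters \<open>(s, t) \<in> (0, 1)\<^sup>2\<close> for which \<open>s u + t v\<close> is integral.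

  For odd \<open>n\<close>, multiplying the quaternion rotations of the prime factors of \<open>n\<close> yields a primitive
  representation \<open>n\<^sup>2 = x\<^sup>2 + y\<^sup>2 + z\<^sup>2\<close> with \<open>x\<close> odd; for \<open>u = (0, 0, n, n)\<close> and
  \<open>v = (y + z, y - z, -x, x)\<close> primitivity forces \<open>t = 1/2\<close>, leaving the \<open>n\<close> points
  \<open>s = (2k + 1)/(2n)\<close>.

  For an odd prime \<open>p = a\<^sup>2 + b\<^sup>2 + c\<^sup>2 + d\<^sup>2\<close> (Lagrange, by descent), take for \<open>u, v\<close> two rows of
  \<open>p\<close> times the rotation matrix of the quaternion \<open>a + b i + c j + d k\<close>. Their length \<open>p\<^sup>2\<close> and their
  cross product, \<open>p\<close> times the third row, show that every integral \<open>s u + t v\<close> has \<open>p s, p t \<in> \<int>\<close>;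
  as all \<open>2 \<times> 2\<close> minors are divisible by \<open>p\<close>, these points are \<open>(j/p, (\<sigma> j mod p)/p)\<close>, and
  exactly \<open>p - 1\<close> of them are interior. If a row degenerates, \<open>p\<close> is a sum of two squares
  \<open>a\<^sup>2 + b\<^sup>2\<close> and \<open>u = (a, b, 0, 0)\<close>, \<open>v = (-b, a, 0, 0)\<close> serve instead.\<close>

section \<open>Interior lattice points of lattice squares\<close>

lemma inj_orthogonal_param:
  fixes u v :: "'a::real_inner"
  assumes "inner u v = 0" "u \<noteq> 0" "v \<noteq> 0"
  shows "inj (\<lambda>(s, t). s *\<^sub>R u + t *\<^sub>R v)"
proof (rule injI, clarsimp)
  fix s t s' t' :: real
  assume "s *\<^sub>R u + t *\<^sub>R v = s' *\<^sub>R u + t' *\<^sub>R v"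
  then have "(s - s') *\<^sub>R u + (t - t') *\<^sub>R v = 0"
    by (simp add: algebra_simps)
  then have "inner u ((s - s') *\<^sub>R u + (t - t') *\<^sub>R v) = 0"
    "inner v ((s - s') *\<^sub>R u + (t - t') *\<^sub>R v) = 0" by simp_all
  then have "(s - s') * inner u u = 0" "(t - t') * inner v v = 0"
    using assms(1) by (simp_all add: inner_add_right inner_commute)
  then show "s = s' \<and> t = t'" using assms(2,3) by simp
qed

lemma rel_interior_lattice_square:
  fixes u v :: "real^4"
  assumes "inner u v = 0" "u \<noteq> 0" "v \<noteq> 0"
  shows "rel_interior (lattice_square4 u v) = (\<lambda>(s, t). s *\<^sub>R u + t *\<^sub>R v) ` box 0 One"
proof -
  define f :: "real \<times> real \<Rightarrow> real^4" where "f = (\<lambda>(s, t). s *\<^sub>R u + t *\<^sub>R v)"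
  have "linear f"
    by (intro linearI) (auto simp: f_def algebra_simps)
  have corners: "{(0, 0), (1, 0), (0, 1), (1, 1)} = {x::real \<times> real. \<forall>i\<in>Basis. x \<bullet> i = 0 \<or> x \<bullet> i = 1}"
    by (auto simp: Basis_prod_def)
  have "lattice_square4 u v = f ` (convex hull {(0, 0), (1, 0), (0, 1), (1, 1)})"
    unfolding lattice_square4_def convex_hull_linear_image[OF \<open>linear f\<close>]
    by (simp add: f_def)
  also have "\<dots> = f ` cbox 0 One"
    unfolding corners unit_interval_convex_hull[symmetric] ..
  finally have "lattice_square4 u v = f ` cbox 0 One" .
  moreover have "rel_interior (cbox (0::real \<times> real) One) = box 0 One"
    by (simp add: rel_interior_nonempty_interior interior_cbox box_ne_empty)
  ultimately show ?thesis
    using rel_interior_injective_linear_image[of f "cbox 0 One"] \<open>linear f\<close>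
      inj_orthogonal_param[OF assms] unfolding f_def
    by (simp add: linear_conv_bounded_linear)
qed

lemma card_lattice_points_rel_interior:
  fixes u v :: "real^4"
  assumes "inner u v = 0" "u \<noteq> 0" "v \<noteq> 0"
  shows "card {x \<in> rel_interior (lattice_square4 u v). is_lattice_point4 x} =
    card {(s, t). 0 < s \<and> s < 1 \<and> 0 < t \<and> t < 1 \<and> is_lattice_point4 (s *\<^sub>R u + t *\<^sub>R v)}"
proof -
  have "{x \<in> rel_interior (lattice_square4 u v). is_lattice_point4 x} =
    (\<lambda>(s, t). s *\<^sub>R u + t *\<^sub>R v) `
      {(s, t). 0 < s \<and> s < 1 \<and> 0 < t \<and> t < 1 \<and> is_lattice_point4 (s *\<^sub>R u + t *\<^sub>R v)}"
    unfolding rel_interior_lattice_square[OF assms] by (auto simp: mem_box Basis_prod_def)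
  then show ?thesis
    using inj_orthogonal_param[OF assms] by (simp add: card_image inj_on_subset)
qed

definition interior_lattice_params :: "('i \<Rightarrow> int) \<Rightarrow> ('i \<Rightarrow> int) \<Rightarrow> (real \<times> real) set" where
  "interior_lattice_params U V =
    {(s, t). 0 < s \<and> s < 1 \<and> 0 < t \<and> t < 1 \<and> (\<forall>i. s * of_int (U i) + t * of_int (V i) \<in> \<int>)}"

lemma card_interior_lattice_params_APS4:
  fixes U V :: "4 \<Rightarrow> int"
  assumes "U j \<noteq> 0" "V k \<noteq> 0" "(\<Sum>i\<in>UNIV. U i * V i) = 0"
    and "(\<Sum>i\<in>UNIV. U i * U i) = (\<Sum>i\<in>UNIV. V i * V i)"
  shows "card (interior_lattice_params U V) \<in> APS4"
proof -
  define u :: "real^4" where "u = (\<chi> i. of_int (U i))"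
  define v :: "real^4" where "v = (\<chi> i. of_int (V i))"
  have "u \<noteq> 0" "v \<noteq> 0"
    using assms(1,2) by (auto simp: u_def v_def vec_eq_iff)
  moreover have "inner u v = 0" "inner u u = inner v v"
    using arg_cong[OF assms(3), of real_of_int] arg_cong[OF assms(4), of real_of_int]
    by (simp_all add: u_def v_def inner_vec_def)
  moreover have "is_lattice_point4 u" "is_lattice_point4 v"
    by (simp_all add: u_def v_def is_lattice_point4_def)
  moreover have "card (interior_lattice_params U V) =
      card {x \<in> rel_interior (lattice_square4 u v). is_lattice_point4 x}"
    unfolding card_lattice_points_rel_interior[OF calculation(3,1,2)]
    by (simp add: interior_lattice_params_def is_lattice_point4_def u_def v_def)
  ultimately show ?thesis
    unfolding APS4_def by blast
qed

section \<open>Integral points with denominator a prime\<close>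

lemma of_int_divide_in_Ints_iff:
  fixes m p :: int
  assumes "p \<noteq> 0"
  shows "(of_int m / of_int p :: real) \<in> \<int> \<longleftrightarrow> p dvd m"
proof
  assume "(of_int m / of_int p :: real) \<in> \<int>"
  then obtain z where "(of_int m / of_int p :: real) = of_int z"
    by (auto elim: Ints_cases)
  then have "m = p * z"
    using assms by (simp add: field_simps flip: of_int_mult of_int_eq_iff)
  then show "p dvd m" ..
qed (use assms in auto)

lemma Ints_param_times_sum_squares:
  fixes U V :: "'i::finite \<Rightarrow> int" and s t :: real
  assumes "(\<Sum>i\<in>UNIV. U i * V i) = 0" and lattice: "\<forall>i. s * of_int (U i) + t * of_int (V i) \<in> \<int>"
  shows "s * of_int (\<Sum>i\<in>UNIV. U i * U i) \<in> \<int>" "t * of_int (\<Sum>i\<in>UNIV. V i * V i) \<in> \<int>"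
proof -
  have orth: "(\<Sum>i\<in>UNIV. of_int (U i) * of_int (V i) :: real) = 0"
    using arg_cong[OF assms(1), of "of_int :: int \<Rightarrow> real"] by (simp add: of_int_sum)
  have "(\<Sum>i\<in>UNIV. of_int (U i) * (s * of_int (U i) + t * of_int (V i))) =
      s * of_int (\<Sum>i\<in>UNIV. U i * U i) + t * (\<Sum>i\<in>UNIV. of_int (U i) * of_int (V i))"
    "(\<Sum>i\<in>UNIV. of_int (V i) * (s * of_int (U i) + t * of_int (V i))) =
      t * of_int (\<Sum>i\<in>UNIV. V i * V i) + s * (\<Sum>i\<in>UNIV. of_int (U i) * of_int (V i))"
    by (simp_all add: of_int_sum sum.distrib sum_distrib_left algebra_simps)
  then have "(\<Sum>i\<in>UNIV. of_int (U i) * (s * of_int (U i) + t * of_int (V i))) = s * of_int (\<Sum>i\<in>UNIV. U i * U i)"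
    "(\<Sum>i\<in>UNIV. of_int (V i) * (s * of_int (U i) + t * of_int (V i))) = t * of_int (\<Sum>i\<in>UNIV. V i * V i)"
    unfolding orth by simp_all
  moreover have "(\<Sum>i\<in>UNIV. of_int (W i) * (s * of_int (U i) + t * of_int (V i))) \<in> \<int>" for W :: "'i \<Rightarrow> int"
    using lattice by (intro Ints_sum) (simp add: Ints_mult)
  ultimately show "s * of_int (\<Sum>i\<in>UNIV. U i * U i) \<in> \<int>" "t * of_int (\<Sum>i\<in>UNIV. V i * V i) \<in> \<int>"
    by metis+
qed

lemma Ints_param_times_minor:
  fixes U V :: "'i \<Rightarrow> int" and s t :: real
  assumes lattice: "\<forall>i. s * of_int (U i) + t * of_int (V i) \<in> \<int>"
  shows "s * of_int (U i * V j - U j * V i) \<in> \<int>" "t * of_int (U i * V j - U j * V i) \<in> \<int>"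
proof -
  have "s * of_int (U i * V j - U j * V i) =
      of_int (V j) * (s * of_int (U i) + t * of_int (V i)) - of_int (V i) * (s * of_int (U j) + t * of_int (V j))"
    "t * of_int (U i * V j - U j * V i) =
      of_int (U i) * (s * of_int (U j) + t * of_int (V j)) - of_int (U j) * (s * of_int (U i) + t * of_int (V i))"
    by (simp_all add: algebra_simps)
  then show "s * of_int (U i * V j - U j * V i) \<in> \<int>" "t * of_int (U i * V j - U j * V i) \<in> \<int>"
    using lattice by (metis Ints_diff Ints_mult Ints_of_int)+
qed

lemma Ints_mult_prime_of_Ints_mult_prime_square:
  fixes p k :: int and r :: real
  assumes p: "prime p" and "r * of_int (p^2) \<in> \<int>" "r * of_int (p * k) \<in> \<int>" "\<not> p dvd k"
  shows "r * of_int p \<in> \<int>"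
proof -
  obtain m w where m: "r * of_int (p^2) = of_int m" and w: "r * of_int (p * k) = of_int w"
    using assms(2,3) by (metis Ints_cases)
  have "p \<noteq> 0"
    using p by auto
  then have rp: "r * of_int p = of_int m / of_int p"
    using m by (simp add: field_simps power2_eq_square)
  have "(of_int (m * k) :: real) = of_int k * (r * of_int (p^2))"
    using m by simp
  also have "\<dots> = of_int p * (r * of_int (p * k))"
    by (simp add: power2_eq_square algebra_simps)
  also have "\<dots> = of_int (p * w)"
    using w by simp
  finally have "p dvd m * k"
    by (metis dvd_triv_left of_int_eq_iff)
  then have "p dvd m"
    using p assms(4) prime_dvd_mult_iff by blast
  then show ?thesis
    unfolding rp using of_int_divide_in_Ints_iff[OF \<open>p \<noteq> 0\<close>] by blast
qed

lemma prime_dvd_minors_imp_proportional: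
  fixes p :: int and U V :: "'i \<Rightarrow> int"
  assumes "prime p" and minors: "\<And>i j. p dvd U i * V j - U j * V i" and "\<not> p dvd V k"
  obtains \<sigma> where "\<And>i. p dvd U i + \<sigma> * V i"
proof -
  obtain \<beta> \<gamma> where bezout: "\<gamma> * p + \<beta> * V k = 1"
    using assms(1,3) prime_imp_coprime by (metis bezout_int coprime_iff_gcd_eq_1)
  have "p dvd U i + (- U k * \<beta>) * V i" for i
  proof -
    have "U i + (- U k * \<beta>) * V i = U i * (\<gamma> * p + \<beta> * V k) + (- U k * \<beta>) * V i"
      using bezout by simp
    also have "\<dots> = U i * \<gamma> * p + \<beta> * (U i * V k - U k * V i)"
      by (simp add: algebra_simps)
    finally have "U i + (- U k * \<beta>) * V i = U i * \<gamma> * p + \<beta> * (U i * V k - U k * V i)" .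
    then show ?thesis
      using minors[of i k] by simp
  qed
  then show thesis ..
qed

lemma frac_param_lattice_point_iff:
  fixes p \<sigma> j l :: int and U V :: "'i \<Rightarrow> int"
  assumes "prime p" and proportional: "\<And>i. p dvd U i + \<sigma> * V i" and "\<not> p dvd V k"
  shows "(\<forall>i. of_int j / of_int p * of_int (U i) + of_int l / of_int p * of_int (V i) \<in> (\<int> :: real set))
    \<longleftrightarrow> p dvd l - \<sigma> * j"
proof -
  have "p \<noteq> 0"
    using assms(1) by auto
  then have frac: "of_int j / of_int p * of_int (U i) + of_int l / of_int p * of_int (V i) \<in> (\<int> :: real set)
      \<longleftrightarrow> p dvd j * U i + l * V i" for i
  proof -
    have "of_int j / of_int p * of_int (U i) + of_int l / of_int p * of_int (V i) =
        (of_int (j * U i + l * V i) / of_int p :: real)"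
      by (simp add: add_divide_distrib)
    then show ?thesis
      using of_int_divide_in_Ints_iff[OF \<open>p \<noteq> 0\<close>] by presburger
  qed
  have split: "j * U i + l * V i = j * (U i + \<sigma> * V i) + (l - \<sigma> * j) * V i" for i
    by (simp add: algebra_simps)
  have "p dvd j * U i + l * V i \<longleftrightarrow> p dvd (l - \<sigma> * j) * V i" for i
    unfolding split using proportional[of i] by (simp add: dvd_add_right_iff)
  then show ?thesis
    unfolding frac using assms(1,3) by (metis dvd_mult2 prime_dvd_mult_iff)
qed

lemma interior_lattice_params_prime_eq:
  fixes p \<sigma> :: int and U V :: "'i \<Rightarrow> int"
  assumes p: "prime p"
    and denom: "\<And>s t :: real. \<forall>i. s * of_int (U i) + t * of_int (V i) \<in> \<int> \<Longrightarrow>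
      of_int p * s \<in> \<int> \<and> of_int p * t \<in> \<int>"
    and \<sigma>: "\<And>i. p dvd U i + \<sigma> * V i" "\<not> p dvd \<sigma>" and V: "\<not> p dvd V k"
  shows "interior_lattice_params U V =
    (\<lambda>i. (of_int i / of_int p, of_int ((\<sigma> * i) mod p) / of_int p)) ` {1..p - 1}"
proof (intro equalityI subsetI)
  have p0: "p > 0"
    using p prime_gt_0_int by blast
  note frac_iff = frac_param_lattice_point_iff[of p U \<sigma> V k, OF p \<sigma>(1) V]
  {
    fix x :: "real \<times> real"
    assume "x \<in> (\<lambda>i. (of_int i / of_int p, of_int ((\<sigma> * i) mod p) / of_int p)) ` {1..p - 1}"
    then obtain i where i: "0 < i" "i < p" "x = (of_int i / of_int p, of_int ((\<sigma> * i) mod p) / of_int p)"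
      by (force simp: zle_diff1_eq)
    then have "\<not> p dvd \<sigma> * i"
      using \<sigma>(2) p by (auto simp: prime_dvd_mult_iff dest: zdvd_imp_le)
    then have "0 < (\<sigma> * i) mod p"
      using p0 by (simp add: dvd_eq_mod_eq_0 order_less_le)
    moreover have "p dvd (\<sigma> * i) mod p - \<sigma> * i"
      by (simp add: mod_eq_dvd_iff[symmetric])
    ultimately show "x \<in> interior_lattice_params U V"
      using i p0 frac_iff by (simp add: interior_lattice_params_def)
  next
    fix x assume "x \<in> interior_lattice_params U V"
    then obtain s t where x: "x = (s, t)" "0 < s" "s < 1" "0 < t" "t < 1"
      and lattice: "\<forall>i. s * of_int (U i) + t * of_int (V i) \<in> \<int>"
      by (auto simp: interior_lattice_params_def)
    obtain i l where il: "of_int p * s = of_int i" "of_int p * t = of_int l"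
      using denom[OF lattice] by (auto elim!: Ints_cases)
    then have st: "s = of_int i / of_int p" "t = of_int l / of_int p"
      using p0 by (simp_all add: field_simps)
    have "real_of_int 0 < of_int i" "of_int i < real_of_int p"
      "real_of_int 0 < of_int l" "of_int l < real_of_int p"
      unfolding il[symmetric] using x p0 by simp_all
    then have "0 < i" "i < p" "0 < l" "l < p"
      by (simp_all only: of_int_less_iff)
    moreover have "p dvd l - \<sigma> * i"
      using frac_iff lattice st by simp
    ultimately have "l = (\<sigma> * i) mod p"
      by (metis mod_eq_dvd_iff mod_pos_pos_trivial less_le)
    then show "x \<in> (\<lambda>i. (of_int i / of_int p, of_int ((\<sigma> * i) mod p) / of_int p)) ` {1..p - 1}"
      using x st \<open>0 < i\<close> \<open>i < p\<close> by auto
  }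
qed

lemma card_interior_lattice_params_prime:
  fixes p :: int and U V :: "'i \<Rightarrow> int"
  assumes p: "prime p"
    and denom: "\<And>s t :: real. \<forall>i. s * of_int (U i) + t * of_int (V i) \<in> \<int> \<Longrightarrow>
      of_int p * s \<in> \<int> \<and> of_int p * t \<in> \<int>"
    and minors: "\<And>i j. p dvd U i * V j - U j * V i"
    and U: "\<not> p dvd U j" and V: "\<not> p dvd V k"
  shows "card (interior_lattice_params U V) = nat (p - 1)"
proof -
  obtain \<sigma> where \<sigma>: "\<And>i. p dvd U i + \<sigma> * V i"
    using prime_dvd_minors_imp_proportional[of p U V k] p minors V by blast
  have "\<not> p dvd \<sigma>"
    using \<sigma>[of j] U by (metis dvd_add_right_iff dvd_mult2 add.commute)
  have "interior_lattice_params U V =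
      (\<lambda>i. (of_int i / of_int p, of_int ((\<sigma> * i) mod p) / of_int p)) ` {1..p - 1}"
    using p denom \<sigma> \<open>\<not> p dvd \<sigma>\<close> V by (rule interior_lattice_params_prime_eq)
  moreover have "inj_on (\<lambda>i. (of_int i / of_int p :: real, of_int ((\<sigma> * i) mod p) / of_int p :: real)) {1..p - 1}"
    using prime_gt_0_int[OF p] by (auto simp: inj_on_def)
  ultimately show ?thesis
    by (simp add: card_image)
qed

section \<open>Odd primes are sums of four squares\<close>

lemma euler_four_square_identity:
  fixes a1 a2 a3 a4 r1 r2 r3 r4 :: "'a::comm_ring_1"
  shows "(a1^2 + a2^2 + a3^2 + a4^2) * (r1^2 + r2^2 + r3^2 + r4^2) =
    (a1*r1 + a2*r2 + a3*r3 + a4*r4)^2 + (a1*r2 - a2*r1 + a3*r4 - a4*r3)^2 +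
    (a1*r3 - a3*r1 + a4*r2 - a2*r4)^2 + (a1*r4 - a4*r1 + a2*r3 - a3*r2)^2"
  by (simp add: power2_eq_square algebra_simps)

lemma exists_symmetric_residue:
  fixes a m :: int
  assumes "m > 0"
  obtains q r where "a = m * q + r" "2 * \<bar>r\<bar> \<le> m" "2 * r \<noteq> m"
proof
  define k where "k = m div 2"
  define r where "r = (a + k) mod m"
  have "m = 2 * k \<or> m = 2 * k + 1"
    unfolding k_def by presburger
  moreover have "0 \<le> r" "r < m"
    using assms by (simp_all add: r_def)
  ultimately show "2 * \<bar>r - k\<bar> \<le> m" "2 * (r - k) \<noteq> m"
    by presburger+
  show "a = m * ((a + k) div m) + (r - k)"
    by (simp add: r_def algebra_simps)
qed

lemma sum_four_squares_of_residues:
  fixes m p n a1 a2 a3 a4 q1 q2 q3 q4 r1 r2 r3 r4 :: int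
  assumes "m \<noteq> 0"
    and "a1 = m * q1 + r1" "a2 = m * q2 + r2" "a3 = m * q3 + r3" "a4 = m * q4 + r4"
    and a: "a1^2 + a2^2 + a3^2 + a4^2 = m * p" and r: "r1^2 + r2^2 + r3^2 + r4^2 = m * n"
  shows "\<exists>z1 z2 z3 z4. z1^2 + z2^2 + z3^2 + z4^2 = n * p"
proof -
  define z1 where "z1 = p - (a1*q1 + a2*q2 + a3*q3 + a4*q4)"
  define z2 where "z2 = a2*q1 - a1*q2 + a4*q3 - a3*q4"
  define z3 where "z3 = a3*q1 - a1*q3 + a2*q4 - a4*q2"
  define z4 where "z4 = a4*q1 - a1*q4 + a3*q2 - a2*q3"
  have "a1*r1 + a2*r2 + a3*r3 + a4*r4 = m * z1"
    using a assms(2-5) unfolding z1_def by (simp add: power2_eq_square algebra_simps)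
  moreover have "a1*r2 - a2*r1 + a3*r4 - a4*r3 = m * z2"
    "a1*r3 - a3*r1 + a4*r2 - a2*r4 = m * z3" "a1*r4 - a4*r1 + a2*r3 - a3*r2 = m * z4"
    using assms(2-5) unfolding z2_def z3_def z4_def by (simp_all add: algebra_simps)
  ultimately have "(m * p) * (m * n) = (m * z1)^2 + (m * z2)^2 + (m * z3)^2 + (m * z4)^2"
    using euler_four_square_identity[of a1 a2 a3 a4 r1 r2 r3 r4] a r by simp
  then have "m^2 * (z1^2 + z2^2 + z3^2 + z4^2) = m^2 * (n * p)"
    by (simp add: power2_eq_square algebra_simps)
  then show ?thesis
    using \<open>m \<noteq> 0\<close> by auto
qed

text \<open>Rules out the exceptional case of the descent, in which all residues equal \<open>-m/2\<close>.\<close>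
lemma sum_four_squares_half_residues_even:
  fixes k p q1 q2 q3 q4 :: int
  assumes "k \<noteq> 0"
    and "(k * (2*q1 - 1))^2 + (k * (2*q2 - 1))^2 + (k * (2*q3 - 1))^2 + (k * (2*q4 - 1))^2 = 2 * k * p"
  shows "even p"
proof -
  have "k * (2 * (k * (q1^2 - q1 + q2^2 - q2 + q3^2 - q3 + q4^2 - q4 + 1))) = k * p"
    using assms(2) by (simp add: power2_eq_square algebra_simps)
  then show ?thesis
    using assms(1) by (metis dvd_triv_left mult_cancel_left)
qed

lemma four_mult_square_le_of_abs_le:
  fixes r m :: int
  assumes "2 * \<bar>r\<bar> \<le> m"
  shows "4 * r^2 \<le> m^2"
  using power_mono[OF assms, of 2] by (simp add: power_mult_distrib)

lemma sum_four_squares_eq_square_extremal: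
  fixes m r1 r2 r3 r4 :: int
  assumes r_le: "2 * \<bar>r1\<bar> \<le> m" "2 * \<bar>r2\<bar> \<le> m" "2 * \<bar>r3\<bar> \<le> m" "2 * \<bar>r4\<bar> \<le> m"
    and r_ne: "2 * r1 \<noteq> m" "2 * r2 \<noteq> m" "2 * r3 \<noteq> m" "2 * r4 \<noteq> m"
    and r: "r1^2 + r2^2 + r3^2 + r4^2 = m^2"
  shows "2 * r1 = - m" "2 * r2 = - m" "2 * r3 = - m" "2 * r4 = - m"
proof -
  have "(2 * r)^2 = m^2" if "r \<in> {r1, r2, r3, r4}" for r
    using that r four_mult_square_le_of_abs_le[OF r_le(1)] four_mult_square_le_of_abs_le[OF r_le(2)]
      four_mult_square_le_of_abs_le[OF r_le(3)] four_mult_square_le_of_abs_le[OF r_le(4)]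
    by (auto simp: power_mult_distrib)
  then have "2 * r = m \<or> 2 * r = - m" if "r \<in> {r1, r2, r3, r4}" for r
    using that by (simp only: power2_eq_iff)
  then show "2 * r1 = - m" "2 * r2 = - m" "2 * r3 = - m" "2 * r4 = - m"
    using r_ne by auto
qed

lemma four_squares_residue_quotient_bounds:
  fixes p m n a1 a2 a3 a4 q1 q2 q3 q4 r1 r2 r3 r4 :: int
  assumes p: "prime p" "odd p" and m: "1 < m" "m < p"
    and a_eq: "a1 = m * q1 + r1" "a2 = m * q2 + r2" "a3 = m * q3 + r3" "a4 = m * q4 + r4"
    and r_le: "2 * \<bar>r1\<bar> \<le> m" "2 * \<bar>r2\<bar> \<le> m" "2 * \<bar>r3\<bar> \<le> m" "2 * \<bar>r4\<bar> \<le> m"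
    and r_ne: "2 * r1 \<noteq> m" "2 * r2 \<noteq> m" "2 * r3 \<noteq> m" "2 * r4 \<noteq> m"
    and a: "a1^2 + a2^2 + a3^2 + a4^2 = m * p" and r: "r1^2 + r2^2 + r3^2 + r4^2 = m * n"
  shows "0 < n" "n < m"
proof -
  have "m * n \<le> m * m"
    using r four_mult_square_le_of_abs_le[OF r_le(1)] four_mult_square_le_of_abs_le[OF r_le(2)]
      four_mult_square_le_of_abs_le[OF r_le(3)] four_mult_square_le_of_abs_le[OF r_le(4)]
    by (simp add: power2_eq_square)
  then have "n \<le> m"
    using m by simp
  show "0 < n"
  proof (rule ccontr)
    assume "\<not> 0 < n"
    then have "r1^2 + r2^2 + r3^2 + r4^2 \<le> 0"
      using r m by (simp add: mult_nonneg_nonpos)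
    then have "r1 = 0 \<and> r2 = 0 \<and> r3 = 0 \<and> r4 = 0"
      by (smt (verit) zero_le_power2 power_eq_0_iff)
    then have "m * (m * (q1^2 + q2^2 + q3^2 + q4^2)) = m * p"
      using a a_eq by (simp add: power2_eq_square algebra_simps)
    then have "m dvd p"
      using m by (metis dvd_triv_left mult_cancel_left not_one_less_zero)
    moreover have "0 \<le> m"
      using m by simp
    ultimately have "m = 1 \<or> m = p"
      using p(1) unfolding prime_int_iff by blast
    then show False
      using m by simp
  qed
  show "n < m"
  proof (rule ccontr)
    assume "\<not> n < m"
    then have "r1^2 + r2^2 + r3^2 + r4^2 = m^2"
      using r \<open>n \<le> m\<close> by (simp add: power2_eq_square)
    then have half: "r2 = r1 \<and> r3 = r1 \<and> r4 = r1 \<and> m = 2 * (- r1)"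
      using sum_four_squares_eq_square_extremal[OF r_le r_ne] by linarith
    then have "(-r1 * (2*q1 - 1))^2 + (-r1 * (2*q2 - 1))^2 + (-r1 * (2*q3 - 1))^2
        + (-r1 * (2*q4 - 1))^2 = 2 * (-r1) * p"
      using a a_eq by (simp add: algebra_simps)
    moreover have "- r1 \<noteq> 0"
      using m half by simp
    ultimately show False
      using sum_four_squares_half_residues_even p(2) by blast
  qed
qed

lemma eq_of_prime_dvd_diff_squares:
  fixes p x y :: int
  assumes p: "prime p" and "0 \<le> x" "2 * x < p" "0 \<le> y" "2 * y < p" and dvd: "p dvd x^2 - y^2"
  shows "x = y"
proof -
  have "x^2 - y^2 = (x - y) * (x + y)"
    by (simp add: power2_eq_square algebra_simps)
  then have "p dvd x - y \<or> p dvd x + y"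
    using dvd p prime_dvd_mult_iff by metis
  moreover have "\<bar>x - y\<bar> < p" "\<bar>x + y\<bar> < p"
    using assms(2-5) by auto
  ultimately have "x - y = 0 \<or> x + y = 0"
    using dvd_imp_le_int[of "x - y" p] dvd_imp_le_int[of "x + y" p] p prime_gt_0_int by force
  then show ?thesis
    using assms(2,4) by auto
qed

text \<open>Pigeonhole: the \<open>(p + 1)/2\<close> values \<open>x\<^sup>2\<close> and the \<open>(p + 1)/2\<close> values \<open>-1 - y\<^sup>2\<close> cannot be
  distinct modulo \<open>p\<close>.\<close>
lemma prime_dvd_sum_two_squares_plus_one:
  fixes p :: int
  assumes p: "prime p" "odd p"
  shows "\<exists>x y. 0 \<le> x \<and> 2 * x < p \<and> 0 \<le> y \<and> 2 * y < p \<and> p dvd x^2 + y^2 + 1"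
proof (rule ccontr)
  assume no: "\<not> ?thesis"
  obtain h where h: "p = 2 * h + 1"
    using p(2) by (metis oddE)
  have "0 \<le> h"
    using h prime_ge_2_int[OF p(1)] by simp
  define A where "A = (\<lambda>x. x^2 mod p) ` {0..h}"
  define B where "B = (\<lambda>y. (-1 - y^2) mod p) ` {0..h}"
  have "inj_on (\<lambda>x. x^2 mod p) {0..h}"
    using eq_of_prime_dvd_diff_squares[OF p(1)] h by (auto simp: inj_on_def mod_eq_dvd_iff)
  moreover have "inj_on (\<lambda>y. (-1 - y^2) mod p) {0..h}"
    using eq_of_prime_dvd_diff_squares[OF p(1)] h
    by (auto simp: inj_on_def mod_eq_dvd_iff dvd_diff_commute)
  ultimately have "card A = nat (h + 1)" "card B = nat (h + 1)"
    by (simp_all add: A_def B_def card_image)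
  moreover have "A \<inter> B = {}"
    using no h by (fastforce simp: A_def B_def mod_eq_dvd_iff algebra_simps)
  moreover have "A \<union> B \<subseteq> {0..<p}"
    using prime_gt_0_int[OF p(1)] by (auto simp: A_def B_def)
  ultimately have "2 * nat (h + 1) \<le> card {0..<p}"
    using card_mono[of "{0..<p}" "A \<union> B"] by (simp add: card_Un_disjoint A_def B_def)
  then show False
    using h \<open>0 \<le> h\<close> by (simp add: nat_add_distrib)
qed

lemma four_squares_descent_step:
  fixes p m a1 a2 a3 a4 :: int
  assumes p: "prime p" "odd p" and m: "1 < m" "m < p"
    and a: "a1^2 + a2^2 + a3^2 + a4^2 = m * p"
  shows "\<exists>n z1 z2 z3 z4. 0 < n \<and> n < m \<and> z1^2 + z2^2 + z3^2 + z4^2 = n * p"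
proof -
  have "0 < m"
    using m by simp
  obtain q1 r1 where 1: "a1 = m * q1 + r1" "2 * \<bar>r1\<bar> \<le> m" "2 * r1 \<noteq> m"
    using exists_symmetric_residue[OF \<open>0 < m\<close>] .
  obtain q2 r2 where 2: "a2 = m * q2 + r2" "2 * \<bar>r2\<bar> \<le> m" "2 * r2 \<noteq> m"
    using exists_symmetric_residue[OF \<open>0 < m\<close>] .
  obtain q3 r3 where 3: "a3 = m * q3 + r3" "2 * \<bar>r3\<bar> \<le> m" "2 * r3 \<noteq> m"
    using exists_symmetric_residue[OF \<open>0 < m\<close>] .
  obtain q4 r4 where 4: "a4 = m * q4 + r4" "2 * \<bar>r4\<bar> \<le> m" "2 * r4 \<noteq> m"
    using exists_symmetric_residue[OF \<open>0 < m\<close>] .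
  define n where "n = p - 2 * (a1*q1 + a2*q2 + a3*q3 + a4*q4) + m * (q1^2 + q2^2 + q3^2 + q4^2)"
  have "r1^2 + r2^2 + r3^2 + r4^2 =
      (a1^2 + a2^2 + a3^2 + a4^2) - 2 * m * (a1*q1 + a2*q2 + a3*q3 + a4*q4) + m^2 * (q1^2 + q2^2 + q3^2 + q4^2)"
    using 1(1) 2(1) 3(1) 4(1) by (simp add: power2_eq_square algebra_simps)
  also have "\<dots> = m * n"
    unfolding a n_def by (simp add: power2_eq_square algebra_simps)
  finally have r: "r1^2 + r2^2 + r3^2 + r4^2 = m * n" .
  note bounds = four_squares_residue_quotient_bounds[OF p m 1(1) 2(1) 3(1) 4(1) 1(2) 2(2) 3(2) 4(2)
      1(3) 2(3) 3(3) 4(3) a r]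
  obtain z1 z2 z3 z4 where "z1^2 + z2^2 + z3^2 + z4^2 = n * p"
    using sum_four_squares_of_residues[OF _ 1(1) 2(1) 3(1) 4(1) a r] m by auto
  then show ?thesis
    using bounds by blast
qed

lemma odd_prime_sum_four_squares:
  fixes p :: int
  assumes p: "prime p" "odd p"
  shows "\<exists>a b c d. a^2 + b^2 + c^2 + d^2 = p"
proof -
  have descent: "\<exists>a b c d. a^2 + b^2 + c^2 + d^2 = p"
    if "0 < m" "m < p" "a1^2 + a2^2 + a3^2 + a4^2 = m * p" for m a1 a2 a3 a4 :: int
    using that
  proof (induction "nat m" arbitrary: m a1 a2 a3 a4 rule: less_induct)
    case less
    show ?case
    proof (cases "m = 1")
      case True
      then show ?thesis
        using less.prems(3) by auto
    next
      case False
      then obtain n z1 z2 z3 z4 where "0 < n" "n < m" "z1^2 + z2^2 + z3^2 + z4^2 = n * p"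
        using four_squares_descent_step[OF p _ less.prems(2,3)] less.prems(1) by auto
      then show ?thesis
        using less.hyps[of n] less.prems(2) by auto
    qed
  qed
  obtain x y where xy: "0 \<le> x" "2 * x < p" "0 \<le> y" "2 * y < p" "p dvd x^2 + y^2 + 1"
    using prime_dvd_sum_two_squares_plus_one[OF p] by blast
  then obtain m where m: "x^2 + y^2 + 1 = p * m"
    by blast
  have "(2 * x)^2 < p^2" "(2 * y)^2 < p^2"
    using xy power_strict_mono[of "2 * x" p 2] power_strict_mono[of "2 * y" p 2] by simp_all
  moreover have "4 \<le> p * p"
    using prime_ge_2_int[OF p(1)] mult_mono[of 2 p 2 p] by simp
  ultimately have "4 * (p * m) < 4 * (p * p)"
    unfolding m[symmetric] by (simp add: power2_eq_square)
  then have "m < p"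
    using prime_gt_0_int[OF p(1)] by simp
  moreover have "0 < m"
    using m prime_gt_0_int[OF p(1)] by (smt (verit) zero_le_power2 mult_nonneg_nonpos)
  ultimately show ?thesis
    using descent[of m x y 1 0] m by (simp add: algebra_simps)
qed

section \<open>Quaternion rotations and primitive sums of three squares\<close>

text \<open>The entries \<open>rot\<^sub>i\<^sub>j a b c d\<close> form \<open>N\<close> times the rotation matrix of \<open>\<real>\<^sup>3\<close> associated with the quaternion
  \<open>a + b i + c j + d k\<close> of norm \<open>N = a\<^sup>2 + b\<^sup>2 + c\<^sup>2 + d\<^sup>2\<close>; the \<open>rot_image\<^sub>j\<close> are the coordinates of
  \<open>(x, y, z)\<close> multiplied by this matrix from the right.\<close>

definition rot11 :: "int \<Rightarrow> int \<Rightarrow> int \<Rightarrow> int \<Rightarrow> int" where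
  "rot11 a b c d = a^2 + b^2 - c^2 - d^2"
definition rot12 :: "int \<Rightarrow> int \<Rightarrow> int \<Rightarrow> int \<Rightarrow> int" where
  "rot12 a b c d = 2 * (b*c + a*d)"
definition rot13 :: "int \<Rightarrow> int \<Rightarrow> int \<Rightarrow> int \<Rightarrow> int" where
  "rot13 a b c d = 2 * (b*d - a*c)"
definition rot21 :: "int \<Rightarrow> int \<Rightarrow> int \<Rightarrow> int \<Rightarrow> int" where
  "rot21 a b c d = 2 * (b*c - a*d)"
definition rot22 :: "int \<Rightarrow> int \<Rightarrow> int \<Rightarrow> int \<Rightarrow> int" where
  "rot22 a b c d = a^2 - b^2 + c^2 - d^2"
definition rot23 :: "int \<Rightarrow> int \<Rightarrow> int \<Rightarrow> int \<Rightarrow> int" where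
  "rot23 a b c d = 2 * (c*d + a*b)"
definition rot31 :: "int \<Rightarrow> int \<Rightarrow> int \<Rightarrow> int \<Rightarrow> int" where
  "rot31 a b c d = 2 * (b*d + a*c)"
definition rot32 :: "int \<Rightarrow> int \<Rightarrow> int \<Rightarrow> int \<Rightarrow> int" where
  "rot32 a b c d = 2 * (c*d - a*b)"
definition rot33 :: "int \<Rightarrow> int \<Rightarrow> int \<Rightarrow> int \<Rightarrow> int" where
  "rot33 a b c d = a^2 - b^2 - c^2 + d^2"

lemmas rot_defs = rot11_def rot12_def rot13_def rot21_def rot22_def rot23_def rot31_def rot32_def rot33_def

definition rot_image1 :: "int \<Rightarrow> int \<Rightarrow> int \<Rightarrow> int \<Rightarrow> int \<Rightarrow> int \<Rightarrow> int \<Rightarrow> int" where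
  "rot_image1 a b c d x y z = x * rot11 a b c d + y * rot21 a b c d + z * rot31 a b c d"
definition rot_image2 :: "int \<Rightarrow> int \<Rightarrow> int \<Rightarrow> int \<Rightarrow> int \<Rightarrow> int \<Rightarrow> int \<Rightarrow> int" where
  "rot_image2 a b c d x y z = x * rot12 a b c d + y * rot22 a b c d + z * rot32 a b c d"
definition rot_image3 :: "int \<Rightarrow> int \<Rightarrow> int \<Rightarrow> int \<Rightarrow> int \<Rightarrow> int \<Rightarrow> int \<Rightarrow> int" where
  "rot_image3 a b c d x y z = x * rot13 a b c d + y * rot23 a b c d + z * rot33 a b c d"

lemma rot_rows_sum_squares:
  "(rot11 a b c d)^2 + (rot12 a b c d)^2 + (rot13 a b c d)^2 = (a^2 + b^2 + c^2 + d^2)^2"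
  "(rot21 a b c d)^2 + (rot22 a b c d)^2 + (rot23 a b c d)^2 = (a^2 + b^2 + c^2 + d^2)^2"
  "(rot31 a b c d)^2 + (rot32 a b c d)^2 + (rot33 a b c d)^2 = (a^2 + b^2 + c^2 + d^2)^2"
  unfolding rot_defs by (simp_all add: power2_eq_square algebra_simps)

lemma rot_rows_orthogonal_cross:
  "rot11 a b c d * rot21 a b c d + rot12 a b c d * rot22 a b c d + rot13 a b c d * rot23 a b c d = 0"
  "rot12 a b c d * rot23 a b c d - rot13 a b c d * rot22 a b c d = (a^2 + b^2 + c^2 + d^2) * rot31 a b c d"
  "rot13 a b c d * rot21 a b c d - rot11 a b c d * rot23 a b c d = (a^2 + b^2 + c^2 + d^2) * rot32 a b c d"
  "rot11 a b c d * rot22 a b c d - rot12 a b c d * rot21 a b c d = (a^2 + b^2 + c^2 + d^2) * rot33 a b c d"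
  unfolding rot_defs by (simp_all add: power2_eq_square algebra_simps)

lemma sum_squares_rot_image:
  "(rot_image1 a b c d x y z)^2 + (rot_image2 a b c d x y z)^2 + (rot_image3 a b c d x y z)^2
    = (a^2 + b^2 + c^2 + d^2)^2 * (x^2 + y^2 + z^2)"
  unfolding rot_image1_def rot_image2_def rot_image3_def rot_defs by (simp add: power2_eq_square algebra_simps)

lemma rot_mult_rot_image:
  "rot11 a b c d * rot_image1 a b c d x y z + rot12 a b c d * rot_image2 a b c d x y z
    + rot13 a b c d * rot_image3 a b c d x y z = (a^2 + b^2 + c^2 + d^2)^2 * x"
  "rot21 a b c d * rot_image1 a b c d x y z + rot22 a b c d * rot_image2 a b c d x y z
    + rot23 a b c d * rot_image3 a b c d x y z = (a^2 + b^2 + c^2 + d^2)^2 * y"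
  "rot31 a b c d * rot_image1 a b c d x y z + rot32 a b c d * rot_image2 a b c d x y z
    + rot33 a b c d * rot_image3 a b c d x y z = (a^2 + b^2 + c^2 + d^2)^2 * z"
  unfolding rot_image1_def rot_image2_def rot_image3_def rot_defs by (simp_all add: power2_eq_square algebra_simps)

lemma rot_image_add_rot_image_neg:
  "rot_image1 a b c d x y z + rot_image1 a b c d x (-y) (-z) = 2 * x * rot11 a b c d"
  "rot_image2 a b c d x y z + rot_image2 a b c d x (-y) (-z) = 2 * x * rot12 a b c d"
  "rot_image3 a b c d x y z + rot_image3 a b c d x (-y) (-z) = 2 * x * rot13 a b c d"
  unfolding rot_image1_def rot_image2_def rot_image3_def by simp_all

lemma rot12_rot13_eq_0D:
  assumes "rot12 a b c d = 0" "rot13 a b c d = 0"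
  shows "(a = 0 \<and> b = 0) \<or> (c = 0 \<and> d = 0)"
proof -
  have "c * (a^2 + b^2) = b * (b*c + a*d) - a * (b*d - a*c)"
    "d * (a^2 + b^2) = a * (b*c + a*d) + b * (b*d - a*c)"
    by (simp_all add: power2_eq_square algebra_simps)
  then have "c * (a^2 + b^2) = 0" "d * (a^2 + b^2) = 0"
    using assms by (simp_all add: rot12_def rot13_def)
  then show ?thesis
    by (auto simp: sum_power2_eq_zero_iff)
qed

lemma prime_not_dvd_nonzero_even:
  fixes p e :: int
  assumes "prime p" "odd p" "e \<noteq> 0" "even e" "e^2 \<le> p^2"
  shows "\<not> p dvd e"
proof
  assume "p dvd e"
  then obtain j where j: "e = p * j" ..
  with assms(2-4) have "\<bar>j\<bar> \<ge> 2"
    by (cases "j \<in> {-1, 0, 1}") auto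
  then have "4 \<le> j^2"
    using power_mono[of 2 "\<bar>j\<bar>" 2] by simp
  then have "p^2 * 4 \<le> e^2"
    unfolding j power_mult_distrib by (simp add: mult_left_mono)
  then show False
    using assms(1,5) prime_gt_0_int[of p] by (smt (verit) zero_less_power)
qed

lemma rot_rows_not_dvd:
  fixes p :: int
  assumes p: "prime p" "odd p" and N: "a^2 + b^2 + c^2 + d^2 = p"
  shows "rot12 a b c d \<noteq> 0 \<or> rot13 a b c d \<noteq> 0 \<Longrightarrow>
      \<not> (p dvd rot11 a b c d \<and> p dvd rot12 a b c d \<and> p dvd rot13 a b c d)"
    and "rot21 a b c d \<noteq> 0 \<or> rot23 a b c d \<noteq> 0 \<Longrightarrow>
      \<not> (p dvd rot21 a b c d \<and> p dvd rot22 a b c d \<and> p dvd rot23 a b c d)"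
    and "rot31 a b c d \<noteq> 0 \<or> rot32 a b c d \<noteq> 0 \<Longrightarrow>
      \<not> (p dvd rot31 a b c d \<and> p dvd rot32 a b c d \<and> p dvd rot33 a b c d)"
proof -
  have bound: "e^2 \<le> p^2" if "e^2 + f^2 + g^2 = p^2 \<or> f^2 + e^2 + g^2 = p^2" for e f g :: int
    using that by (smt (verit) zero_le_power2)
  have "\<not> p dvd e" if "e \<noteq> 0" "even e" "e^2 + f^2 + g^2 = p^2 \<or> f^2 + e^2 + g^2 = p^2" for e f g
    using prime_not_dvd_nonzero_even[OF p that(1,2) bound[OF that(3)]] .
  note not_dvd = this[of _ _ "rot11 a b c d"] this[of _ _ "rot22 a b c d"] this[of _ _ "rot33 a b c d"]
  show "rot12 a b c d \<noteq> 0 \<or> rot13 a b c d \<noteq> 0 \<Longrightarrow>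
      \<not> (p dvd rot11 a b c d \<and> p dvd rot12 a b c d \<and> p dvd rot13 a b c d)"
    "rot21 a b c d \<noteq> 0 \<or> rot23 a b c d \<noteq> 0 \<Longrightarrow>
      \<not> (p dvd rot21 a b c d \<and> p dvd rot22 a b c d \<and> p dvd rot23 a b c d)"
    "rot31 a b c d \<noteq> 0 \<or> rot32 a b c d \<noteq> 0 \<Longrightarrow>
      \<not> (p dvd rot31 a b c d \<and> p dvd rot32 a b c d \<and> p dvd rot33 a b c d)"
    using not_dvd rot_rows_sum_squares[of a b c d, unfolded N]
    by (auto simp: rot12_def rot13_def rot21_def rot23_def rot31_def rot32_def add_ac)
qed

lemma gcd_rot_image_eq_1:
  fixes p :: int
  assumes p: "prime p" and N: "a^2 + b^2 + c^2 + d^2 = p" and primitive: "gcd (gcd x y) z = 1"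
    and not_dvd: "\<not> (p dvd rot_image1 a b c d x y z \<and> p dvd rot_image2 a b c d x y z \<and> p dvd rot_image3 a b c d x y z)"
  shows "gcd (gcd (rot_image1 a b c d x y z) (rot_image2 a b c d x y z)) (rot_image3 a b c d x y z) = 1"
    (is "?g = 1")
proof -
  have g: "?g dvd rot_image1 a b c d x y z" "?g dvd rot_image2 a b c d x y z" "?g dvd rot_image3 a b c d x y z"
    by (meson dvd_trans gcd_dvd1 gcd_dvd2)+
  then have "?g dvd p^2 * x" "?g dvd p^2 * y" "?g dvd p^2 * z"
    using rot_mult_rot_image[of a b c d x y z] unfolding N by (metis dvd_add dvd_mult)+
  then have "?g dvd gcd (gcd (p^2 * x) (p^2 * y)) (p^2 * z)"
    by simp
  also have "\<dots> = p^2"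
    using primitive by (simp add: gcd_mult_left)
  finally have "?g dvd p^2" .
  have "\<not> p dvd ?g"
    using not_dvd g dvd_trans[of p ?g] by blast
  then have "coprime ?g (p^2)"
    using p by (simp add: prime_imp_coprime coprime_commute)
  with \<open>?g dvd p^2\<close> have "is_unit ?g"
    using coprime_common_divisor[of ?g "p^2" ?g] by simp
  then show ?thesis
    by simp
qed

lemma prime_not_dvd_primitive_triple:
  fixes p x y z :: int
  assumes "prime p" "gcd (gcd x y) z = 1" "p dvd x" "p dvd y" "p dvd z"
  shows False
proof -
  have "p dvd gcd (gcd x y) z"
    using assms(3-5) by simp
  then show False
    using assms(2) prime_gt_1_int[OF assms(1)] by simp
qed

lemma exists_primitive_triple_permute:
  fixes x y z n :: int
  assumes "gcd (gcd x y) z = 1" "x^2 + y^2 + z^2 = n" "P x \<or> P y \<or> P z"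
  shows "\<exists>x y z. gcd (gcd x y) z = 1 \<and> x^2 + y^2 + z^2 = n \<and> P x"
  using assms(3)
proof (elim disjE)
  assume "P y"
  moreover have "gcd (gcd y x) z = 1" "y^2 + x^2 + z^2 = n"
    using assms(1,2) by (simp_all add: ac_simps)
  ultimately show ?thesis
    by (intro exI[of _ y] exI[of _ x] exI[of _ z]) simp
next
  assume "P z"
  moreover have "gcd (gcd z y) x = 1" "z^2 + y^2 + x^2 = n"
    using assms(1,2) by (simp_all add: ac_simps)
  ultimately show ?thesis
    by (intro exI[of _ z] exI[of _ y] exI[of _ x]) simp
qed (use assms in \<open>intro exI[of _ x] exI[of _ y] exI[of _ z], simp\<close>)

text \<open>Of the two quaternion products \<open>(x, y, z)\<close> and \<open>(x, -y, -z)\<close> at least one stays primitive,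
  since their sum is \<open>2 x\<close> times the first row of the rotation.\<close>
lemma exists_primitive_triple_mult_prime:
  fixes p x y z :: int
  assumes p: "prime p" "odd p" and N: "a^2 + b^2 + c^2 + d^2 = p"
    and row: "\<not> (p dvd rot11 a b c d \<and> p dvd rot12 a b c d \<and> p dvd rot13 a b c d)"
    and primitive: "gcd (gcd x y) z = 1" and n: "x^2 + y^2 + z^2 = m^2" and "\<not> p dvd x"
  shows "\<exists>x' y' z'. gcd (gcd x' y') z' = 1 \<and> x'^2 + y'^2 + z'^2 = (p * m)^2"
proof -
  have "\<not> p dvd 2"
    using p zdvd_imp_le[of p 2] prime_ge_2_int[of p] by (cases "p = 2") auto
  then have "\<not> p dvd 2 * x"
    using p(1) \<open>\<not> p dvd x\<close> by (simp add: prime_dvd_mult_iff)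
  then have "\<not> (p dvd 2 * x * rot11 a b c d \<and> p dvd 2 * x * rot12 a b c d \<and> p dvd 2 * x * rot13 a b c d)"
    using row p(1) by (simp add: prime_dvd_mult_iff)
  moreover have "p dvd 2 * x * rot11 a b c d \<and> p dvd 2 * x * rot12 a b c d \<and> p dvd 2 * x * rot13 a b c d"
    if "p dvd rot_image1 a b c d x y z" "p dvd rot_image2 a b c d x y z" "p dvd rot_image3 a b c d x y z"
      "p dvd rot_image1 a b c d x (-y) (-z)" "p dvd rot_image2 a b c d x (-y) (-z)"
      "p dvd rot_image3 a b c d x (-y) (-z)"
    unfolding rot_image_add_rot_image_neg[of a b c d x y z, symmetric] using that by (simp add: dvd_add)
  ultimately have "\<not> (p dvd rot_image1 a b c d x y z \<and> p dvd rot_image2 a b c d x y z \<and> p dvd rot_image3 a b c d x y z)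
    \<or> \<not> (p dvd rot_image1 a b c d x (-y) (-z) \<and> p dvd rot_image2 a b c d x (-y) (-z)
      \<and> p dvd rot_image3 a b c d x (-y) (-z))"
    by blast
  then obtain y' z' where "gcd (gcd x y') z' = 1" "x^2 + y'^2 + z'^2 = m^2"
    and not_dvd: "\<not> (p dvd rot_image1 a b c d x y' z' \<and> p dvd rot_image2 a b c d x y' z'
      \<and> p dvd rot_image3 a b c d x y' z')"
  proof (elim disjE)
    assume "\<not> (p dvd rot_image1 a b c d x y z \<and> p dvd rot_image2 a b c d x y z
      \<and> p dvd rot_image3 a b c d x y z)"
    then show ?thesis
      using that[of y z] primitive n by blast
  next
    assume "\<not> (p dvd rot_image1 a b c d x (-y) (-z) \<and> p dvd rot_image2 a b c d x (-y) (-z)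
      \<and> p dvd rot_image3 a b c d x (-y) (-z))"
    then show ?thesis
      using that[of "-y" "-z"] primitive n by simp
  qed
  moreover have "(rot_image1 a b c d x y' z')^2 + (rot_image2 a b c d x y' z')^2 + (rot_image3 a b c d x y' z')^2
      = (p * m)^2"
    using sum_squares_rot_image[of a b c d x y' z'] N calculation(2) by (simp add: power_mult_distrib)
  ultimately show ?thesis
    using gcd_rot_image_eq_1[OF p(1) N _ not_dvd] by metis
qed

lemma prime_neq_square:
  fixes p k :: int
  assumes "prime p"
  shows "p \<noteq> k^2"
  using assms prime_power_iff[of k 2] by auto

lemma exists_quaternion_row1_not_dvd:
  fixes p :: int
  assumes p: "prime p" "odd p"
  shows "\<exists>a b c d. a^2 + b^2 + c^2 + d^2 = p \<and>
    \<not> (p dvd rot11 a b c d \<and> p dvd rot12 a b c d \<and> p dvd rot13 a b c d)"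
proof -
  obtain a b c d where N: "a^2 + b^2 + c^2 + d^2 = p"
    using odd_prime_sum_four_squares[OF p] by blast
  show ?thesis
  proof (cases "rot12 a b c d = 0 \<and> rot13 a b c d = 0")
    case True
    have N': "a^2 + c^2 + b^2 + d^2 = p"
      using N by simp
    from True have "(a = 0 \<and> b = 0) \<or> (c = 0 \<and> d = 0)"
      by (intro rot12_rot13_eq_0D) auto
    then have "rot13 a c b d \<noteq> 0"
      using N prime_neq_square[OF p(1), of a] prime_neq_square[OF p(1), of b]
        prime_neq_square[OF p(1), of c] prime_neq_square[OF p(1), of d]
      by (auto simp: rot13_def)
    then show ?thesis
      using rot_rows_not_dvd(1)[OF p N'] N' by blast
  next
    case False
    then show ?thesis
      using rot_rows_not_dvd(1)[OF p N] N by blast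
  qed
qed

lemma odd_square_primitive_sum_three_squares:
  fixes n :: int
  assumes "odd n" "0 < n"
  shows "\<exists>x y z. gcd (gcd x y) z = 1 \<and> x^2 + y^2 + z^2 = n^2"
  using assms
proof (induction "nat n" arbitrary: n rule: less_induct)
  case less
  show ?case
  proof (cases "n = 1")
    case True
    then show ?thesis
      by (intro exI[of _ 1] exI[of _ 0]) simp
  next
    case False
    then obtain p where "prime p" "p dvd n"
      using less.prems prime_divisor_exists[of n] by auto
    then obtain m where n: "n = p * m"
      by (elim dvdE)
    have "odd p" "odd m" "0 < m"
      using less.prems n prime_gt_0_int[OF \<open>prime p\<close>] by (auto simp: zero_less_mult_iff)
    have "m < n"
      using n \<open>0 < m\<close> prime_ge_2_int[OF \<open>prime p\<close>] by (simp add: mult_less_cancel_right1)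
    then have "\<exists>x y z. gcd (gcd x y) z = 1 \<and> x^2 + y^2 + z^2 = m^2"
      using less.hyps[of m] \<open>odd m\<close> \<open>0 < m\<close> by simp
    then obtain x y z where primitive: "gcd (gcd x y) z = 1" and "x^2 + y^2 + z^2 = m^2"
      by metis
    moreover have "\<not> p dvd x \<or> \<not> p dvd y \<or> \<not> p dvd z"
      using prime_not_dvd_primitive_triple[OF \<open>prime p\<close> primitive] by blast
    ultimately obtain x y z where "gcd (gcd x y) z = 1" "x^2 + y^2 + z^2 = m^2" "\<not> p dvd x"
      using exists_primitive_triple_permute[of x y z "m^2" "\<lambda>x. \<not> p dvd x"] by metis
    moreover obtain a b c d where "a^2 + b^2 + c^2 + d^2 = p"
      "\<not> (p dvd rot11 a b c d \<and> p dvd rot12 a b c d \<and> p dvd rot13 a b c d)"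
      using exists_quaternion_row1_not_dvd[OF \<open>prime p\<close> \<open>odd p\<close>] by blast
    ultimately show ?thesis
      using exists_primitive_triple_mult_prime[OF \<open>prime p\<close> \<open>odd p\<close>] n by metis
  qed
qed

section \<open>Odd numbers\<close>

lemma Ints_of_mult_primitive_triple:
  fixes x y z :: int and r :: real
  assumes "gcd (gcd x y) z = 1" "r * of_int x \<in> \<int>" "r * of_int y \<in> \<int>" "r * of_int z \<in> \<int>"
  shows "r \<in> \<int>"
proof -
  obtain u v where "u * gcd x y + v * z = 1"
    using bezout_int[of "gcd x y" z] assms(1) by auto
  moreover obtain u' v' where "u' * x + v' * y = gcd x y"
    using bezout_int by blast
  ultimately have "of_int ((u * u') * x + (u * v') * y + v * z) = (1 :: real)"
    by (metis distrib_left mult.assoc of_int_1)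
  then have "r = of_int (u * u') * (r * of_int x) + of_int (u * v') * (r * of_int y) + of_int v * (r * of_int z)"
    by (simp add: algebra_simps) (metis distrib_left mult.commute mult.right_neutral)
  also have "\<dots> \<in> \<int>"
    using assms(2-4) by (metis Ints_add Ints_mult Ints_of_int)
  finally show ?thesis .
qed

lemma half_of_lattice_param_primitive_triple:
  fixes x y z :: int and c t :: real
  assumes primitive: "gcd (gcd x y) z = 1" and "0 < t" "t < 1"
    and L: "t * of_int (y + z) \<in> \<int>" "t * of_int (y - z) \<in> \<int>"
      "c - t * of_int x \<in> \<int>" "c + t * of_int x \<in> \<int>"
  shows "t = 1 / 2"
proof -
  have "2 * t * of_int x = (c + t * of_int x) - (c - t * of_int x)"
    "2 * t * of_int y = t * of_int (y + z) + t * of_int (y - z)"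
    "2 * t * of_int z = t * of_int (y + z) - t * of_int (y - z)"
    by (simp_all add: algebra_simps)
  then have "2 * t \<in> \<int>"
    using Ints_of_mult_primitive_triple[OF primitive] L by (metis Ints_add Ints_diff)
  then obtain j where j: "2 * t = of_int j"
    by (elim Ints_cases)
  then have "real_of_int 0 < of_int j" "of_int j < real_of_int 2"
    using assms(2,3) by simp_all
  then have "j = 1"
    by (simp only: of_int_less_iff)
  then show ?thesis
    using j by simp
qed

definition int4 :: "int \<Rightarrow> int \<Rightarrow> int \<Rightarrow> int \<Rightarrow> 4 \<Rightarrow> int" where
  "int4 a b c d i = (if i = 1 then a else if i = 2 then b else if i = 3 then c else d)"

lemma int4_simps [simp]: "int4 a b c d 1 = a" "int4 a b c d 2 = b" "int4 a b c d 3 = c" "int4 a b c d 4 = d"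
  by (simp_all add: int4_def)

lemma interior_lattice_params_odd_triple:
  fixes n :: nat and x y z :: int
  assumes n: "odd n" and x: "odd x" and primitive: "gcd (gcd x y) z = 1"
    and sum: "x^2 + y^2 + z^2 = (int n)^2"
  shows "interior_lattice_params (int4 0 0 (int n) (int n)) (int4 (y + z) (y - z) (- x) x) =
    (\<lambda>k. ((2 * real k + 1) / (2 * real n), 1 / 2)) ` {..<n}"
proof -
  have "0 < n"
    using n by (simp add: odd_pos)
  have "even (y + z)"
    using arg_cong[OF sum, of even] n x by simp
  then obtain w1 w2 where w: "y + z = 2 * w1" "y - z = 2 * w2"
    by (metis evenE even_add even_diff)
  obtain x' where x': "x = 2 * x' + 1"
    using x by (metis oddE)
  have lattice_iff: "(\<forall>i. s * of_int (int4 0 0 (int n) (int n) i) + t * of_int (int4 (y + z) (y - z) (- x) x i) \<in> \<int>)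
      \<longleftrightarrow> t * of_int (y + z) \<in> \<int> \<and> t * of_int (y - z) \<in> \<int> \<and>
        s * real n - t * of_int x \<in> \<int> \<and> s * real n + t * of_int x \<in> \<int>" for s t :: real
    by (simp add: forall_4)
  show ?thesis
  proof (intro equalityI subsetI)
    fix st :: "real \<times> real" assume "st \<in> interior_lattice_params (int4 0 0 (int n) (int n)) (int4 (y + z) (y - z) (- x) x)"
    then obtain s t where st: "st = (s, t)" "0 < s" "s < 1" "0 < t" "t < 1"
      and L: "t * of_int (y + z) \<in> \<int>" "t * of_int (y - z) \<in> \<int>"
        "s * real n - t * of_int x \<in> \<int>" "s * real n + t * of_int x \<in> \<int>"
      unfolding interior_lattice_params_def lattice_iff by auto
    have "t = 1 / 2"
      using half_of_lattice_param_primitive_triple[OF primitive st(4,5) L] .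
    obtain i where "s * real n - t * of_int x = of_int i"
      using L(3) by (elim Ints_cases)
    then have "s * real n = of_int (i + x') + 1 / 2"
      using \<open>t = 1 / 2\<close> x' by (simp add: algebra_simps)
    then obtain K where K: "s * real n = of_int K + 1 / 2"
      by blast
    have "0 < s * real n" "s * real n < real n"
      using st \<open>0 < n\<close> by simp_all
    then have "0 \<le> K" "K < int n"
      using K by linarith+
    moreover have "s = (2 * real (nat K) + 1) / (2 * real n)"
      using K \<open>0 \<le> K\<close> \<open>0 < n\<close> by (simp add: field_simps)
    ultimately show "st \<in> (\<lambda>k. ((2 * real k + 1) / (2 * real n), 1 / 2)) ` {..<n}"
      using st \<open>t = 1 / 2\<close> by (auto intro!: image_eqI[of _ _ "nat K"])
  next
    fix st :: "real \<times> real" assume "st \<in> (\<lambda>k. ((2 * real k + 1) / (2 * real n), 1 / 2)) ` {..<n}"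
    then obtain k where k: "k < n" "st = ((2 * real k + 1) / (2 * real n), 1 / 2)"
      by blast
    have "(2 * real k + 1) / (2 * real n) * real n - 1 / 2 * of_int x = of_int (int k - x')"
      "(2 * real k + 1) / (2 * real n) * real n + 1 / 2 * of_int x = of_int (int k + x' + 1)"
      using \<open>0 < n\<close> x' by (simp_all add: field_simps)
    moreover have "(2 * real k + 1) / (2 * real n) < 1"
      using k by (simp add: field_simps)
    ultimately show "st \<in> interior_lattice_params (int4 0 0 (int n) (int n)) (int4 (y + z) (y - z) (- x) x)"
      unfolding interior_lattice_params_def lattice_iff using k w by auto
  qed
qed

lemma odd_in_APS4:
  fixes n :: nat
  assumes n: "odd n"
  shows "n \<in> APS4"
proof -
  have "odd (int n)" "0 < int n"
    using n odd_pos[OF n] by simp_all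
  then obtain x y z where "gcd (gcd x y) z = 1" "x^2 + y^2 + z^2 = (int n)^2"
    using odd_square_primitive_sum_three_squares by metis
  moreover have "odd x \<or> odd y \<or> odd z"
  proof (rule ccontr)
    assume "\<not> (odd x \<or> odd y \<or> odd z)"
    then have "even (x^2 + y^2 + z^2)"
      by simp
    then show False
      using calculation(2) \<open>odd (int n)\<close> by simp
  qed
  ultimately obtain x y z where primitive: "gcd (gcd x y) z = 1"
    and sum: "x^2 + y^2 + z^2 = (int n)^2" and "odd x"
    using exists_primitive_triple_permute[of x y z "(int n)^2" odd] by metis
  have "inj_on (\<lambda>k. ((2 * real k + 1) / (2 * real n), 1 / 2 :: real)) {..<n}"
    using n by (auto simp: inj_on_def odd_pos field_simps)
  then have "card (interior_lattice_params (int4 0 0 (int n) (int n)) (int4 (y + z) (y - z) (- x) x)) = n"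
    unfolding interior_lattice_params_odd_triple[OF n \<open>odd x\<close> primitive sum] by (simp add: card_image)
  moreover have "int n \<noteq> 0" "x \<noteq> 0"
    using odd_pos[OF n] \<open>odd x\<close> by auto
  moreover have "(y + z)^2 + (y - z)^2 + x^2 + x^2 = 2 * (int n)^2"
    using sum by (simp add: power2_eq_square algebra_simps)
  ultimately show ?thesis
    using card_interior_lattice_params_APS4[of "int4 0 0 (int n) (int n)" 3 "int4 (y + z) (y - z) (- x) x" 4]
    by (simp add: sum_4 power2_eq_square algebra_simps)
qed

section \<open>Primes minus one\<close>

lemma prime_minus_one_in_APS4I:
  fixes p :: int and U V :: "4 \<Rightarrow> int"
  assumes p: "prime p"
    and orth: "(\<Sum>i\<in>UNIV. U i * V i) = 0" and norm: "(\<Sum>i\<in>UNIV. U i * U i) = (\<Sum>i\<in>UNIV. V i * V i)"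
    and minors: "\<And>i j. p dvd U i * V j - U j * V i"
    and U: "\<not> p dvd U j" and V: "\<not> p dvd V k"
    and denom: "\<And>s t :: real. \<forall>i. s * of_int (U i) + t * of_int (V i) \<in> \<int> \<Longrightarrow>
      of_int p * s \<in> \<int> \<and> of_int p * t \<in> \<int>"
  shows "nat (p - 1) \<in> APS4"
proof -
  have "U j \<noteq> 0" "V k \<noteq> 0"
    using U V by auto
  then show ?thesis
    using card_interior_lattice_params_APS4[OF _ _ orth norm]
      card_interior_lattice_params_prime[OF p denom minors U V] by metis
qed

lemma prime_minus_one_in_APS4_of_sum_two_squares:
  fixes p a b :: int
  assumes p: "prime p" and N: "a^2 + b^2 = p"
  shows "nat (p - 1) \<in> APS4"
proof (rule prime_minus_one_in_APS4I[OF p, of "int4 a b 0 0" "int4 (-b) a 0 0" 1 2])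
  have "\<not> p dvd a"
  proof
    assume "p dvd a"
    moreover have "a \<noteq> 0"
      using N prime_neq_square[OF p, of b] by auto
    ultimately have "p \<le> \<bar>a\<bar>"
      using dvd_imp_le_int[of a p] prime_gt_0_int[OF p] by simp
    then have "p * p \<le> \<bar>a\<bar> * \<bar>a\<bar>"
      using mult_mono[of p "\<bar>a\<bar>" p "\<bar>a\<bar>"] prime_gt_0_int[OF p] by simp
    also have "\<dots> = p - b^2"
      using N by (simp add: power2_eq_square algebra_simps flip: abs_mult)
    also have "\<dots> \<le> p"
      by simp
    finally show False
      using prime_gt_1_int[OF p] by simp
  qed
  then show "\<not> p dvd int4 a b 0 0 1" "\<not> p dvd int4 (-b) a 0 0 2"
    by simp_all
  have norm: "(\<Sum>i\<in>UNIV. int4 a b 0 0 i * int4 a b 0 0 i) = p"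
    "(\<Sum>i\<in>UNIV. int4 (-b) a 0 0 i * int4 (-b) a 0 0 i) = p"
    using N by (simp_all add: sum_4 power2_eq_square)
  show orth: "(\<Sum>i\<in>UNIV. int4 a b 0 0 i * int4 (-b) a 0 0 i) = 0"
    by (simp add: sum_4)
  show "(\<Sum>i\<in>UNIV. int4 a b 0 0 i * int4 a b 0 0 i) = (\<Sum>i\<in>UNIV. int4 (-b) a 0 0 i * int4 (-b) a 0 0 i)"
    unfolding norm ..
  show "p dvd int4 a b 0 0 i * int4 (-b) a 0 0 j - int4 a b 0 0 j * int4 (-b) a 0 0 i" for i j
  proof -
    have minor: "a * a + b * b = p" "- (b * b) - a * a = - p"
      using N by (simp_all add: power2_eq_square)
    show ?thesis
      using exhaust_4[of i] exhaust_4[of j] by (elim disjE) (simp_all add: minor)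
  qed
  show "of_int p * s \<in> \<int> \<and> of_int p * t \<in> \<int>"
    if "\<forall>i. s * of_int (int4 a b 0 0 i) + t * of_int (int4 (-b) a 0 0 i) \<in> \<int>" for s t :: real
    using Ints_param_times_sum_squares[OF orth that] unfolding norm by (simp add: mult.commute)
qed

lemma dvd_minors4_of_dvd_cross:
  fixes p :: int and U V :: "4 \<Rightarrow> int"
  assumes "p dvd U 2 * V 3 - U 3 * V 2" "p dvd U 3 * V 1 - U 1 * V 3" "p dvd U 1 * V 2 - U 2 * V 1"
    and "U 4 = 0" "V 4 = 0"
  shows "p dvd U i * V j - U j * V i"
proof -
  have "p dvd U i * V j - U j * V i" if "i \<in> {1, 2, 3}" "j \<in> {1, 2, 3}" for i j :: 4
    using that assms(1-3) by (auto simp: dvd_diff_commute)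
  then show ?thesis
    using exhaust_4[of i] exhaust_4[of j] assms(4,5) by fastforce
qed

text \<open>The rows \<open>U, V\<close> have length \<open>p\<^sup>2\<close> and cross product \<open>p\<close> times the third row, which is not
  divisible by \<open>p\<close>; this pins the denominators of integral points \<open>s U + t V\<close> down to \<open>p\<close>.\<close>
lemma prime_minus_one_in_APS4_of_rot_rows:
  fixes p a b c d :: int
  assumes p: "prime p" and N: "a^2 + b^2 + c^2 + d^2 = p"
    and row1: "\<not> (p dvd rot11 a b c d \<and> p dvd rot12 a b c d \<and> p dvd rot13 a b c d)"
    and row2: "\<not> (p dvd rot21 a b c d \<and> p dvd rot22 a b c d \<and> p dvd rot23 a b c d)"
    and row3: "\<not> (p dvd rot31 a b c d \<and> p dvd rot32 a b c d \<and> p dvd rot33 a b c d)"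
  shows "nat (p - 1) \<in> APS4"
proof -
  define U where "U = int4 (rot11 a b c d) (rot12 a b c d) (rot13 a b c d) 0"
  define V where "V = int4 (rot21 a b c d) (rot22 a b c d) (rot23 a b c d) 0"
  have norm: "(\<Sum>i\<in>UNIV. U i * U i) = p^2" "(\<Sum>i\<in>UNIV. V i * V i) = p^2"
    using rot_rows_sum_squares(1,2)[of a b c d] unfolding N by (simp_all add: U_def V_def sum_4 power2_eq_square)
  have orth: "(\<Sum>i\<in>UNIV. U i * V i) = 0"
    using rot_rows_orthogonal_cross(1)[of a b c d] by (simp add: U_def V_def sum_4)
  have cross: "U 2 * V 3 - U 3 * V 2 = p * rot31 a b c d" "U 3 * V 1 - U 1 * V 3 = p * rot32 a b c d"
    "U 1 * V 2 - U 2 * V 1 = p * rot33 a b c d"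
    using rot_rows_orthogonal_cross(2-4)[of a b c d] unfolding N by (simp_all add: U_def V_def)
  then obtain i0 j0 m where minor: "U i0 * V j0 - U j0 * V i0 = p * m" and "\<not> p dvd m"
    using row3 by blast
  have "\<not> p dvd U 1 \<or> \<not> p dvd U 2 \<or> \<not> p dvd U 3" "\<not> p dvd V 1 \<or> \<not> p dvd V 2 \<or> \<not> p dvd V 3"
    using row1 row2 by (simp_all add: U_def V_def)
  then obtain j k where U: "\<not> p dvd U j" and V: "\<not> p dvd V k"
    by blast
  have denom: "of_int p * s \<in> \<int> \<and> of_int p * t \<in> \<int>"
    if "\<forall>i. s * of_int (U i) + t * of_int (V i) \<in> \<int>" for s t :: real
    using Ints_param_times_sum_squares[OF orth that] Ints_param_times_minor[OF that, of i0 j0]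
      Ints_mult_prime_of_Ints_mult_prime_square[OF p _ _ \<open>\<not> p dvd m\<close>]
    unfolding norm minor by (simp add: mult.commute)
  have "p dvd U 2 * V 3 - U 3 * V 2" "p dvd U 3 * V 1 - U 1 * V 3" "p dvd U 1 * V 2 - U 2 * V 1"
    unfolding cross by simp_all
  moreover have "U 4 = 0" "V 4 = 0"
    by (simp_all add: U_def V_def)
  ultimately have minors: "p dvd U i * V j - U j * V i" for i j
    by (rule dvd_minors4_of_dvd_cross)
  show ?thesis
    using norm by (intro prime_minus_one_in_APS4I[OF p orth _ minors U V denom]) simp
qed

lemma odd_prime_minus_one_in_APS4:
  fixes p :: int
  assumes p: "prime p" "odd p"
  shows "nat (p - 1) \<in> APS4"
proof -
  obtain a b c d where N: "a^2 + b^2 + c^2 + d^2 = p"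
    using odd_prime_sum_four_squares[OF p] by blast
  show ?thesis
  proof (cases "(rot12 a b c d \<noteq> 0 \<or> rot13 a b c d \<noteq> 0) \<and> (rot21 a b c d \<noteq> 0 \<or> rot23 a b c d \<noteq> 0)
      \<and> (rot31 a b c d \<noteq> 0 \<or> rot32 a b c d \<noteq> 0)")
    case True
    then show ?thesis
      using prime_minus_one_in_APS4_of_rot_rows[OF p(1) N] rot_rows_not_dvd[OF p N] by blast
  next
    case False
    txt \<open>Rows 2 and 3 are the first rows for the quaternions \<open>(a, c, b, -d)\<close> and \<open>(a, d, b, c)\<close>.\<close>
    then have "(a = 0 \<and> b = 0) \<or> (c = 0 \<and> d = 0) \<or> (a = 0 \<and> c = 0) \<or> (b = 0 \<and> d = 0)
        \<or> (a = 0 \<and> d = 0) \<or> (b = 0 \<and> c = 0)"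
      using rot12_rot13_eq_0D[of a b c d] rot12_rot13_eq_0D[of a c b "-d"]
        rot12_rot13_eq_0D[of a d b c]
      by (auto simp: rot_defs algebra_simps)
    then have "\<exists>x y. x^2 + y^2 = p"
      using N by (elim disjE) (auto intro: exI[of _ a] exI[of _ b] exI[of _ c] exI[of _ d])
    then show ?thesis
      using prime_minus_one_in_APS4_of_sum_two_squares[OF p(1)] by blast
  qed
qed

lemma prime_minus_one_in_APS4:
  fixes p :: nat
  assumes "prime p"
  shows "p - 1 \<in> APS4"
proof (cases "p = 2")
  case True
  then show ?thesis
    using odd_in_APS4[of 1] by simp
next
  case False
  then have "odd (int p)"
    using assms prime_odd_nat[of p] prime_ge_2_nat[OF assms] by simp
  then show ?thesis
    using odd_prime_minus_one_in_APS4[of "int p"] assms by (simp add: nat_diff_distrib')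
qed

theorem theorem2p13:
  shows "(\<forall>n::nat. odd n \<longrightarrow> n \<in> APS4) \<and>
         (\<forall>p::nat. prime p \<and> p \<ge> 11 \<longrightarrow> p - 1 \<in> APS4)"
  using odd_in_APS4 prime_minus_one_in_APS4 by blast

end
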